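(* For every sequent $\Gamma\Rightarrow\Delta$: if $\Gamma\Rightarrow\Delta$ is provable in $\mathsf{Grz}_\infty+\mathsf{cut}$, then $\Gamma\Rightarrow\Delta$ is provable in $\mathsf{Grz}_\infty$.
   Context: Formulas are built from $\bot$ and atomic propositions $p$ using $\to$ and the unary modality $\Box$. A sequent is an expression $\Gamma\Rightarrow\Delta$ where $\Gamma,\Delta$ are finite multisets of formulas; for a multiset $\Pi=A_1,\dots,A_n$, $\Box\Pi$ denotes $\Box A_1,\dots,\Box A_n$. The sequent calculus $\mathsf{Grz}_\infty$ has initial sequents $\Gamma,p\Rightarrow p,\Delta$ ($p$ atomic) and $\Gamma,\bot\Rightarrow\Delta$, and the rules: $(\to_L)$ from $\Gamma,B\Rightarrow\Delta$ and $\Gamma\Rightarrow A,\Delta$ infer $\Gamma,A\to B\Rightarrow\Delta$; $(\to_R)$ from $\Gamma,A\Rightarrow B,\Delta$ infer $\Gamma\Rightarrow A\to B,\Delta$; $(\mathsf{refl})$ from $\Gamma,B,\Box B\Rightarrow\Delta$ infer $\Gamma,\Box B\Rightarrow\Delta$; $(\Box)$ from the left premise $\Gamma,\Box\Pi\Rightarrow A,\Delta$ and the right premise $\Box\Pi\Rightarrow A$ infer $\Gamma,\Box\Pi\Rightarrow\Box A,\Delta$. The system $\mathsf{Grz}_\infty+\mathsf{cut}$ additionally has the rule $(\mathsf{cut})$: from $\Gamma\Rightarrow A,\Delta$ and $\Gamma,A\Rightarrow\Delta$ infer $\Gamma\Rightarrow\Delta$. An $\infty$-proof in one of these systems is a possibly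 infinite tree whose nodes are labelled by sequents, built according to the rules of the system, whose leaves are labelled by initial sequents, and such that every infinite branch passes through a right premise of the rule $(\Box)$ infinitely many times. A sequent is provable in the system if there is an $\infty$-proof with root labelled by it. *)

theory Defs
  imports Main "HOL-Library.Multiset"
begin

datatype fm = Bot | Atom nat | Imp fm fm | Box fm

type_synonym sequent = "fm multiset \<times> fm multiset"

text \<open>One-step rule instances: conclusion, list of premises; each premise carries a flag
  that is True iff it is the right premise of the rule (Box).\<close>
inductive grz_rule :: "bool \<Rightarrow> sequent \<Rightarrow> (sequent \<times> bool) list \<Rightarrow> bool" for withcut :: bool where
  ax:   "grz_rule withcut (add_mset (Atom p) \<Gamma>, add_mset (Atom p) \<Delta>) []"
| bot:  "grz_rule withcut (add_mset Bot \<Gamma>, \<Delta>) []"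
| impL: "grz_rule withcut (add_mset (Imp A B) \<Gamma>, \<Delta>)
           [((add_mset B \<Gamma>, \<Delta>), False), ((\<Gamma>, add_mset A \<Delta>), False)]"
| impR: "grz_rule withcut (\<Gamma>, add_mset (Imp A B) \<Delta>) [((add_mset A \<Gamma>, add_mset B \<Delta>), False)]"
| refl: "grz_rule withcut (add_mset (Box B) \<Gamma>, \<Delta>)
           [((add_mset B (add_mset (Box B) \<Gamma>), \<Delta>), False)]"
| box:  "grz_rule withcut (\<Gamma> + image_mset Box \<Pi>, add_mset (Box A) \<Delta>)
           [((\<Gamma> + image_mset Box \<Pi>, add_mset A \<Delta>), False), ((image_mset Box \<Pi>, {#A#}), True)]"
| cut:  "withcut \<Longrightarrow> grz_rule withcut (\<Gamma>, \<Delta>)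
           [((\<Gamma>, add_mset A \<Delta>), False), ((add_mset A \<Gamma>, \<Delta>), False)]"

text \<open>Possibly infinite trees are represented by positions (lists of child indices):
  lab p is the sequent at node p, nch p its number of children, rb p says whether
  node p is a right premise of (Box).\<close>
definition valid_pos :: "(nat list \<Rightarrow> nat) \<Rightarrow> nat list \<Rightarrow> bool" where
  "valid_pos nch p \<longleftrightarrow> (\<forall>k < length p. p ! k < nch (take k p))"

definition inf_proof :: "bool \<Rightarrow> (nat list \<Rightarrow> sequent) \<Rightarrow> (nat list \<Rightarrow> nat) \<Rightarrow> (nat list \<Rightarrow> bool) \<Rightarrow> bool" where
  "inf_proof withcut lab nch rb \<longleftrightarrow>
     (\<forall>p. valid_pos nch p \<longrightarrow>
        grz_rule withcut (lab p) (map (\<lambda>i. (lab (p @ [i]), rb (p @ [i]))) [0..<nch p])) \<and>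
     (\<forall>b :: nat \<Rightarrow> nat. (\<forall>n. b n < nch (map b [0..<n])) \<longrightarrow>
        infinite {n. rb (map b [0..<Suc n])})"

definition provable :: "bool \<Rightarrow> sequent \<Rightarrow> bool" where
  "provable withcut S \<longleftrightarrow> (\<exists>lab nch rb. inf_proof withcut lab nch rb \<and> lab [] = S)"

abbreviation Grz_inf_provable :: "sequent \<Rightarrow> bool" where
  "Grz_inf_provable S \<equiv> provable False S"

abbreviation Grz_inf_cut_provable :: "sequent \<Rightarrow> bool" where
  "Grz_inf_cut_provable S \<equiv> provable True S"

end

theory Submission
  imports Defs "HOL-Library.Nat_Bijection"
begin

text \<open>Cut is eliminated semantically, via finite partial orders (the Kripke frames of Grz).
  An \<open>\<infinity>\<close>-proof, with or without cut, is sound: a refutation of a conclusion is inherited by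
  some premise at the same world, except for right premises of \<open>(\<Box>)\<close>, which are refuted at a
  strictly later world; induction on the number of successors of the world then produces a branch
  through only finitely many right premises of \<open>(\<Box>)\<close>.
  Conversely, backward proof search without cut from a valid sequent succeeds: the sequent is
  decomposed by the propositional rules and \<open>(refl)\<close> while all formulas seen are recorded, and
  when these rules are exhausted \<open>(\<Box>)\<close> has a valid right premise, since otherwise
  countermodels of all candidates glued below a new root would refute the sequent. A rank that
  decreases at every step except at right premises of \<open>(\<Box>)\<close> makes every infinite branch of
  the search tree meet them infinitely often.\<close>

fun sat :: "nat set \<Rightarrow> (nat \<Rightarrow> nat \<Rightarrow> bool) \<Rightarrow> (nat \<Rightarrow> nat \<Rightarrow> bool) \<Rightarrow> nat \<Rightarrow> fm \<Rightarrow> bool" where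
  "sat W R V w Bot = False"
| "sat W R V w (Atom p) = V w p"
| "sat W R V w (Imp A B) = (sat W R V w A \<longrightarrow> sat W R V w B)"
| "sat W R V w (Box A) = (\<forall>v\<in>W. R w v \<longrightarrow> sat W R V v A)"

definition grz_model :: "nat set \<Rightarrow> (nat \<Rightarrow> nat \<Rightarrow> bool) \<Rightarrow> bool" where
  "grz_model W R \<longleftrightarrow> finite W \<and> (\<forall>w\<in>W. R w w)
     \<and> (\<forall>u\<in>W. \<forall>v\<in>W. \<forall>x\<in>W. R u v \<longrightarrow> R v x \<longrightarrow> R u x)
     \<and> (\<forall>u\<in>W. \<forall>v\<in>W. R u v \<longrightarrow> R v u \<longrightarrow> u = v)"

definition refutes :: "nat set \<Rightarrow> (nat \<Rightarrow> nat \<Rightarrow> bool) \<Rightarrow> (nat \<Rightarrow> nat \<Rightarrow> bool) \<Rightarrow> nat \<Rightarrow> sequent \<Rightarrow> bool" where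
  "refutes W R V w S \<longleftrightarrow> w \<in> W \<and> (\<forall>F\<in>#fst S. sat W R V w F) \<and> (\<forall>F\<in>#snd S. \<not> sat W R V w F)"

definition valid :: "sequent \<Rightarrow> bool" where
  "valid S \<longleftrightarrow> (\<forall>W R V w. grz_model W R \<longrightarrow> w \<in> W \<longrightarrow> (\<forall>v\<in>W. R w v) \<longrightarrow> \<not> refutes W R V w S)"

lemma valid_by_refutation:
  assumes "valid S" "\<And>W R V w. grz_model W R \<Longrightarrow> refutes W R V w S' \<Longrightarrow> refutes W R V w S"
  shows "valid S'"
  using assms unfolding valid_def by blast

lemma grz_model_refl: "grz_model W R \<Longrightarrow> w \<in> W \<Longrightarrow> R w w"
  unfolding grz_model_def by blast

lemma grz_rule_refutation_step:
  assumes "grz_rule c S ps" "grz_model W R" "refutes W R V w S"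
  shows "\<exists>j<length ps. \<exists>w'\<in>W. R w w' \<and> refutes W R V w' (fst (ps!j)) \<and>
            (if snd (ps!j) then w' \<noteq> w else w' = w)"
proof -
  have w: "w \<in> W" "R w w" using assms(2,3) grz_model_refl by (auto simp: refutes_def)
  from assms(1) show ?thesis
  proof cases
    case (impL A B \<Gamma> \<Delta>)
    then show ?thesis using assms(3) w
      by (cases "sat W R V w A") (force simp: refutes_def)+
  next
    case (impR \<Gamma> A B \<Delta>)
    then show ?thesis using assms(3) w by (force simp: refutes_def)
  next
    case (refl B \<Gamma> \<Delta>)
    then show ?thesis using assms(3) w by (force simp: refutes_def)
  next
    case (cut \<Gamma> \<Delta> A)
    then show ?thesis using assms(3) w
      by (cases "sat W R V w A") (force simp: refutes_def)+
  next
    case (box \<Gamma> \<Pi> A \<Delta>)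
    show ?thesis
    proof (cases "sat W R V w A")
      case False
      then show ?thesis using box assms(3) w by (force simp: refutes_def)
    next
      case True
      obtain v where v: "v \<in> W" "R w v" "\<not> sat W R V v A"
        using assms(3) box by (auto simp: refutes_def)
      have "\<forall>u\<in>W. R v u \<longrightarrow> R w u" using assms(2) v w(1) unfolding grz_model_def by blast
      moreover have "\<forall>B\<in>#\<Pi>. \<forall>u\<in>W. R w u \<longrightarrow> sat W R V u B"
        using assms(3) box by (simp add: refutes_def ball_Un)
      ultimately have "refutes W R V v (image_mset Box \<Pi>, {#A#})"
        using v by (auto simp: refutes_def)
      moreover have "v \<noteq> w" using True v by auto
      ultimately show ?thesis using box v by (intro exI[of _ 1]) auto
    qed
  qed (use assms(3) in \<open>auto simp: refutes_def\<close>)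
qed

definition succ_card :: "nat set \<Rightarrow> (nat \<Rightarrow> nat \<Rightarrow> bool) \<Rightarrow> nat \<Rightarrow> nat" where
  "succ_card W R w = card {v\<in>W. R w v}"

lemma succ_card_less:
  assumes "grz_model W R" "w \<in> W" "w' \<in> W" "R w w'" "w' \<noteq> w"
  shows "succ_card W R w' < succ_card W R w"
proof -
  have "{v\<in>W. R w' v} \<subset> {v\<in>W. R w v}"
    using assms unfolding grz_model_def by blast
  moreover have "finite {v\<in>W. R w v}" using assms(1) unfolding grz_model_def by auto
  ultimately show ?thesis unfolding succ_card_def by (rule psubset_card_mono[rotated])
qed

lemma valid_pos_snoc: "valid_pos nch (p @ [i]) \<longleftrightarrow> valid_pos nch p \<and> i < nch p"
  unfolding valid_pos_def
proof safe
  fix k assume "\<forall>k<length (p @ [i]). (p @ [i]) ! k < nch (take k (p @ [i]))" "k < length p"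
  then show "p ! k < nch (take k p)" by (auto simp: nth_append dest!: spec[of _ k])
next
  assume "\<forall>k<length (p @ [i]). (p @ [i]) ! k < nch (take k (p @ [i]))"
  then show "i < nch p" by (auto dest!: spec[of _ "length p"])
next
  fix k assume "\<forall>k<length p. p ! k < nch (take k p)" "i < nch p" "k < length (p @ [i])"
  then show "(p @ [i]) ! k < nch (take k (p @ [i]))"
    by (cases "k < length p") (auto simp: nth_append)
qed

text \<open>In an \<open>\<infinity>\<close>-proof no node starts an infinite path avoiding right premises of \<open>(\<Box>)\<close>:
  prefixing it with the path from the root would give a forbidden branch.\<close>
lemma inf_proof_no_box_free_path:
  assumes ip: "inf_proof c lab nch rb" and p0: "valid_pos nch p0" "P p0"
    and step: "\<And>p. valid_pos nch p \<Longrightarrow> P p \<Longrightarrow> \<exists>i<nch p. \<not> rb (p @ [i]) \<and> P (p @ [i])"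
  shows False
proof -
  define next_idx where "next_idx p = (SOME i. i < nch p \<and> \<not> rb (p @ [i]) \<and> P (p @ [i]))" for p
  define idx where "idx n q = (if n < length p0 then p0 ! n else next_idx q)" for n q
  define pos where "pos = rec_nat [] (\<lambda>n q. q @ [idx n q])"
  define b where "b n = idx n (pos n)" for n
  have pos_b: "pos n = map b [0..<n]" for n
    by (induction n) (simp_all add: pos_def b_def)
  have pos_p0: "pos n = take n p0" if "n \<le> length p0" for n
    using that by (induction n) (simp_all add: pos_def idx_def take_Suc_conv_app_nth)
  have after_p0: "valid_pos nch (pos n) \<and> P (pos n) \<and> (n > length p0 \<longrightarrow> \<not> rb (pos n))"
    if "length p0 \<le> n" for n
    using that
  proof (induction n rule: dec_induct)
    case base then show ?case using p0 pos_p0 by simp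
  next
    case (step n)
    have "\<exists>i. i < nch (pos n) \<and> \<not> rb (pos n @ [i]) \<and> P (pos n @ [i])"
      using assms(4) step.IH by blast
    then have "next_idx (pos n) < nch (pos n) \<and> \<not> rb (pos n @ [next_idx (pos n)])
        \<and> P (pos n @ [next_idx (pos n)])"
      unfolding next_idx_def by (rule someI_ex)
    moreover have "pos (Suc n) = pos n @ [next_idx (pos n)]"
      using step.hyps by (simp add: pos_def idx_def)
    ultimately show ?case using step.IH valid_pos_snoc by simp
  qed
  have "b n < nch (map b [0..<n])" for n
  proof (cases "n < length p0")
    case True
    then show ?thesis using p0(1) pos_p0[of n] pos_b[of n]
      by (simp add: b_def idx_def valid_pos_def)
  next
    case False
    then have "valid_pos nch (pos (Suc n))" using after_p0 by simp
    then show ?thesis using pos_b[of "Suc n"] pos_b[of n] by (simp add: valid_pos_snoc)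
  qed
  then have "infinite {n. rb (map b [0..<Suc n])}" using ip unfolding inf_proof_def by blast
  moreover have "{n. rb (map b [0..<Suc n])} \<subseteq> {..<length p0}"
  proof
    fix n assume "n \<in> {n. rb (map b [0..<Suc n])}"
    then show "n \<in> {..<length p0}" using after_p0[of "Suc n"] pos_b[of "Suc n"] by force
  qed
  ultimately show False using finite_subset by blast
qed

lemma inf_proof_sound:
  assumes ip: "inf_proof c lab nch rb" and m: "grz_model W R" and p: "valid_pos nch p"
  shows "\<not> refutes W R V w (lab p)"
  using p
proof (induction w arbitrary: p rule: measure_induct_rule[of "succ_card W R"])
  case (less w)
  show ?case
  proof
    assume "refutes W R V w (lab p)"
    have "\<exists>i<nch q. \<not> rb (q @ [i]) \<and> refutes W R V w (lab (q @ [i]))"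
      if q: "valid_pos nch q" "refutes W R V w (lab q)" for q
    proof -
      have "grz_rule c (lab q) (map (\<lambda>i. (lab (q @ [i]), rb (q @ [i]))) [0..<nch q])"
        using ip q(1) unfolding inf_proof_def by blast
      from grz_rule_refutation_step[OF this m q(2)] obtain i w' where
        i: "i < nch q" "w' \<in> W" "R w w'" "refutes W R V w' (lab (q @ [i]))"
          "if rb (q @ [i]) then w' \<noteq> w else w' = w"
        by (auto simp del: upt_Suc)
      have "w \<in> W" using q(2) by (simp add: refutes_def)
      moreover have "valid_pos nch (q @ [i])" using q(1) i(1) valid_pos_snoc by blast
      ultimately have "\<not> rb (q @ [i])"
        using less.IH[OF succ_card_less[OF m _ i(2,3)]] i(4,5) by auto
      then show ?thesis using i by auto
    qed
    then show False
      using inf_proof_no_box_free_path[where P = "\<lambda>q. refutes W R V w (lab q)", OF ip less.prems]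
        \<open>refutes W R V w (lab p)\<close> by blast
  qed
qed

lemma provable_imp_valid: "provable c S \<Longrightarrow> valid S"
  using inf_proof_sound[of c _ _ _ _ _ "[]"] unfolding provable_def valid_def valid_pos_def by fastforce

definition glue_idx :: "nat \<Rightarrow> nat \<Rightarrow> nat" where
  "glue_idx i x = Suc (prod_encode (i, x))"

definition unglue :: "nat \<Rightarrow> nat \<times> nat" where
  "unglue u = prod_decode (u - 1)"

lemma unglue_glue_idx [simp]: "unglue (glue_idx i x) = (i, x)"
  by (simp add: glue_idx_def unglue_def)

lemma glue_idx_nonzero [simp]: "glue_idx i x \<noteq> 0"
  by (simp add: glue_idx_def)

lemma glue_idx_eq_iff [simp]: "glue_idx i x = glue_idx j y \<longleftrightarrow> i = j \<and> x = y"
  by (simp add: glue_idx_def)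

text \<open>The models \<open>Ws i, Rs i\<close> for \<open>i < n\<close> are put side by side, world \<open>x\<close> of model \<open>i\<close>
  becoming \<open>glue_idx i x\<close>, below a new root \<open>0\<close> whose atoms are given by \<open>P\<close>.\<close>
definition glue_W :: "nat \<Rightarrow> (nat \<Rightarrow> nat set) \<Rightarrow> nat set" where
  "glue_W n Ws = insert 0 (\<Union>i<n. glue_idx i ` Ws i)"

definition glue_R :: "(nat \<Rightarrow> nat \<Rightarrow> nat \<Rightarrow> bool) \<Rightarrow> nat \<Rightarrow> nat \<Rightarrow> bool" where
  "glue_R Rs u v \<longleftrightarrow> u = 0 \<or>
     (v \<noteq> 0 \<and> fst (unglue u) = fst (unglue v) \<and> Rs (fst (unglue u)) (snd (unglue u)) (snd (unglue v)))"

definition glue_V :: "(nat \<Rightarrow> bool) \<Rightarrow> (nat \<Rightarrow> nat \<Rightarrow> nat \<Rightarrow> bool) \<Rightarrow> nat \<Rightarrow> nat \<Rightarrow> bool" where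
  "glue_V P Vs u p = (if u = 0 then P p else Vs (fst (unglue u)) (snd (unglue u)) p)"

lemma mem_glue_W: "u \<in> glue_W n Ws \<longleftrightarrow> u = 0 \<or> (\<exists>i<n. \<exists>x\<in>Ws i. u = glue_idx i x)"
  unfolding glue_W_def by auto

lemma glue_R_simps [simp]:
  "glue_R Rs 0 v"
  "glue_R Rs (glue_idx i x) (glue_idx j y) \<longleftrightarrow> i = j \<and> Rs i x y"
  "\<not> glue_R Rs (glue_idx i x) 0"
  unfolding glue_R_def by auto

lemma glue_R_trans:
  assumes models: "\<forall>i<n. grz_model (Ws i) (Rs i)"
    and "u \<in> glue_W n Ws" "v \<in> glue_W n Ws" "x \<in> glue_W n Ws"
    and uv: "glue_R Rs u v" and vx: "glue_R Rs v x"
  shows "glue_R Rs u x"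
proof (cases "u = 0")
  case False
  then obtain i a where a: "i < n" "a \<in> Ws i" "u = glue_idx i a" using assms(2) by (auto simp: mem_glue_W)
  then have "v \<noteq> 0" using uv by (auto simp: glue_R_def)
  then obtain j b where b: "j < n" "b \<in> Ws j" "v = glue_idx j b" using assms(3) by (auto simp: mem_glue_W)
  then have "x \<noteq> 0" using vx by (auto simp: glue_R_def)
  then obtain k c where c: "k < n" "c \<in> Ws k" "x = glue_idx k c" using assms(4) by (auto simp: mem_glue_W)
  have "i = j" "j = k" "Rs i a b" "Rs i b c" using uv vx a b c by auto
  then have "Rs i a c" using models a b c unfolding grz_model_def by blast
  then show ?thesis using a c \<open>i = j\<close> \<open>j = k\<close> by simp
qed simp

lemma glue_R_antisym:
  assumes models: "\<forall>i<n. grz_model (Ws i) (Rs i)"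
    and "u \<in> glue_W n Ws" "v \<in> glue_W n Ws" and uv: "glue_R Rs u v" and vu: "glue_R Rs v u"
  shows "u = v"
proof (cases "u = 0 \<or> v = 0")
  case True then show ?thesis using uv vu assms(2,3) by (auto simp: mem_glue_W)
next
  case False
  then obtain i a j b where ab: "i < n" "a \<in> Ws i" "u = glue_idx i a" "j < n" "b \<in> Ws j" "v = glue_idx j b"
    using assms(2,3) by (auto simp: mem_glue_W)
  then have "i = j" "Rs i a b" "Rs i b a" using uv vu by auto
  then have "a = b" using models ab unfolding grz_model_def by blast
  then show ?thesis using ab \<open>i = j\<close> by simp
qed

lemma grz_model_glue:
  assumes "\<forall>i<n. grz_model (Ws i) (Rs i)"
  shows "grz_model (glue_W n Ws) (glue_R Rs)"
proof -
  have "finite (glue_W n Ws)" "\<forall>w\<in>glue_W n Ws. glue_R Rs w w"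
    using assms unfolding glue_W_def grz_model_def by auto
  then show ?thesis
    unfolding grz_model_def using glue_R_trans[OF assms] glue_R_antisym[OF assms] by blast
qed

lemma sat_glue:
  assumes "i < n" "x \<in> Ws i"
  shows "sat (glue_W n Ws) (glue_R Rs) (glue_V P Vs) (glue_idx i x) F = sat (Ws i) (Rs i) (Vs i) x F"
  using assms(2)
proof (induction F arbitrary: x)
  case (Atom p) then show ?case by (simp add: glue_V_def)
next
  case (Box A)
  show ?case
  proof
    assume L: "sat (glue_W n Ws) (glue_R Rs) (glue_V P Vs) (glue_idx i x) (Box A)"
    show "sat (Ws i) (Rs i) (Vs i) x (Box A)"
    proof (simp, intro ballI impI)
      fix y assume y: "y \<in> Ws i" "Rs i x y"
      have "glue_idx i y \<in> glue_W n Ws" using y assms(1) by (auto simp: mem_glue_W)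
      then have "sat (glue_W n Ws) (glue_R Rs) (glue_V P Vs) (glue_idx i y) A" using L y by simp
      then show "sat (Ws i) (Rs i) (Vs i) y A" using Box.IH y(1) by simp
    qed
  next
    assume L: "sat (Ws i) (Rs i) (Vs i) x (Box A)"
    show "sat (glue_W n Ws) (glue_R Rs) (glue_V P Vs) (glue_idx i x) (Box A)"
    proof (simp, intro ballI impI)
      fix v assume v: "v \<in> glue_W n Ws" "glue_R Rs (glue_idx i x) v"
      then obtain j y where jy: "j < n" "y \<in> Ws j" "v = glue_idx j y" by (auto simp: mem_glue_W)
      then have "j = i" "Rs i x y" using v(2) by auto
      then show "sat (glue_W n Ws) (glue_R Rs) (glue_V P Vs) v A" using Box.IH jy L by simp
    qed
  qed
qed auto

lemma sat_glue_root_Box: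
  "sat (glue_W n Ws) (glue_R Rs) (glue_V P Vs) 0 (Box B) \<longleftrightarrow>
     sat (glue_W n Ws) (glue_R Rs) (glue_V P Vs) 0 B \<and> (\<forall>i<n. \<forall>y\<in>Ws i. sat (Ws i) (Rs i) (Vs i) y B)"
proof
  assume "sat (glue_W n Ws) (glue_R Rs) (glue_V P Vs) 0 (Box B)"
  moreover have "0 \<in> glue_W n Ws" "\<forall>i<n. \<forall>y\<in>Ws i. glue_idx i y \<in> glue_W n Ws"
    by (auto simp: mem_glue_W)
  ultimately show "sat (glue_W n Ws) (glue_R Rs) (glue_V P Vs) 0 B \<and> (\<forall>i<n. \<forall>y\<in>Ws i. sat (Ws i) (Rs i) (Vs i) y B)"
    using sat_glue by (metis glue_R_simps(1) sat.simps(4))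
next
  assume "sat (glue_W n Ws) (glue_R Rs) (glue_V P Vs) 0 B \<and> (\<forall>i<n. \<forall>y\<in>Ws i. sat (Ws i) (Rs i) (Vs i) y B)"
  then show "sat (glue_W n Ws) (glue_R Rs) (glue_V P Vs) 0 (Box B)"
    by (auto simp: mem_glue_W sat_glue)
qed

lemma countermodels_exist:
  assumes "\<forall>A\<in>set L. \<not> valid (S A)"
  shows "\<exists>Ws Rs ws Vs. \<forall>i<length L. grz_model (Ws i) (Rs i) \<and> ws i \<in> Ws i
    \<and> (\<forall>v\<in>Ws i. Rs i (ws i) v) \<and> refutes (Ws i) (Rs i) (Vs i) (ws i) (S (L ! i))"
proof -
  have "\<forall>i. \<exists>W R w V. i < length L \<longrightarrow>
      grz_model W R \<and> w \<in> W \<and> (\<forall>v\<in>W. R w v) \<and> refutes W R V w (S (L ! i))"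
    using assms nth_mem unfolding valid_def by fastforce
  then show ?thesis by metis
qed

fun is_box :: "fm \<Rightarrow> bool" where
  "is_box (Box A) = True"
| "is_box _ = False"

fun unbox :: "fm \<Rightarrow> fm" where
  "unbox (Box A) = A"
| "unbox _ = Bot"

definition boxes :: "fm multiset \<Rightarrow> fm multiset" where
  "boxes G = filter_mset is_box G"

lemma image_Box_unbox_boxes: "image_mset Box (image_mset unbox (boxes G)) = boxes G"
  unfolding boxes_def by (induction G) (auto elim: is_box.elims)

lemma Box_in_boxes [simp]: "Box B \<in># boxes G \<longleftrightarrow> Box B \<in># G"
  unfolding boxes_def by simp

definition is_axiom :: "fm multiset \<Rightarrow> fm multiset \<Rightarrow> bool" where
  "is_axiom G D \<longleftrightarrow> Bot \<in># G \<or> (\<exists>p. Atom p \<in># G \<and> Atom p \<in># D)"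

text \<open>A state of the proof search: the current sequent, the sets of all formulas seen so far
  in the antecedent and in the succedent since the last right premise of \<open>(\<Box>)\<close>, and whether
  the node is such a right premise.\<close>
datatype search_state =
  State (st_ant: "fm multiset") (st_suc: "fm multiset") (st_seen_ant: "fm set")
    (st_seen_suc: "fm set") (st_box_premise: bool)

fun decomposed_ant :: "fm set \<Rightarrow> fm set \<Rightarrow> fm \<Rightarrow> bool" where
  "decomposed_ant Ha Hs (Imp A B) \<longleftrightarrow> B \<in> Ha \<or> A \<in> Hs"
| "decomposed_ant Ha Hs _ \<longleftrightarrow> False"

fun decomposed_suc :: "fm set \<Rightarrow> fm set \<Rightarrow> fm \<Rightarrow> bool" where
  "decomposed_suc Ha Hs (Imp A B) \<longleftrightarrow> A \<in> Ha \<and> B \<in> Hs"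
| "decomposed_suc Ha Hs (Box A) \<longleftrightarrow> A \<in> Hs"
| "decomposed_suc Ha Hs _ \<longleftrightarrow> False"

lemma decomposed_ant_mono:
  "decomposed_ant Ha Hs F \<Longrightarrow> Ha \<subseteq> Ha' \<Longrightarrow> Hs \<subseteq> Hs' \<Longrightarrow> decomposed_ant Ha' Hs' F"
  by (cases F) auto

lemma decomposed_suc_mono:
  "decomposed_suc Ha Hs F \<Longrightarrow> Ha \<subseteq> Ha' \<Longrightarrow> Hs \<subseteq> Hs' \<Longrightarrow> decomposed_suc Ha' Hs' F"
  by (cases F) auto

definition search_inv :: "search_state \<Rightarrow> bool" where
  "search_inv s \<longleftrightarrow> valid (st_ant s, st_suc s)
     \<and> set_mset (st_ant s) \<subseteq> st_seen_ant s \<and> set_mset (st_suc s) \<subseteq> st_seen_suc s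
     \<and> (\<forall>F\<in>st_seen_ant s. F \<in># st_ant s \<or> decomposed_ant (st_seen_ant s) (st_seen_suc s) F)
     \<and> (\<forall>F\<in>st_seen_suc s. F \<in># st_suc s \<or> decomposed_suc (st_seen_ant s) (st_seen_suc s) F)"

lemma saturated_box_premise_valid:
  assumes inv: "search_inv (State G D Ha Hs f)"
    and no_ax: "\<not> is_axiom G D"
    and no_imp: "\<forall>A B. Imp A B \<notin># G" "\<forall>A B. Imp A B \<notin># D"
    and reflected: "\<forall>B. Box B \<in># G \<longrightarrow> B \<in> Ha"
  shows "\<exists>A. Box A \<in># D \<and> valid (boxes G, {#A#})"
proof (rule ccontr)
  assume no_premise: "\<not> ?thesis"
  have "finite {A. Box A \<in># D}"
    using finite_vimageI[of "set_mset D" Box] by (simp add: vimage_def inj_def)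
  then obtain L where L: "set L = {A. Box A \<in># D}" using finite_list by blast
  have "\<forall>A\<in>set L. \<not> valid (boxes G, {#A#})" using L no_premise by auto
  then obtain Ws Rs ws Vs where cm: "\<forall>i<length L. grz_model (Ws i) (Rs i) \<and> ws i \<in> Ws i
      \<and> (\<forall>v\<in>Ws i. Rs i (ws i) v) \<and> refutes (Ws i) (Rs i) (Vs i) (ws i) (boxes G, {#L ! i#})"
    using countermodels_exist[of L "\<lambda>A. (boxes G, {#A#})"] by auto
  define W where "W = glue_W (length L) Ws"
  define R where "R = glue_R Rs"
  define V where "V = glue_V (\<lambda>p. Atom p \<in># G) Vs"
  have inv': "valid (G, D)" "set_mset G \<subseteq> Ha" "set_mset D \<subseteq> Hs"
    "\<forall>F\<in>Ha. F \<in># G \<or> decomposed_ant Ha Hs F" "\<forall>F\<in>Hs. F \<in># D \<or> decomposed_suc Ha Hs F"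
    using inv unfolding search_inv_def by auto
  have truth: "(F \<in> Ha \<longrightarrow> sat W R V 0 F) \<and> (F \<in> Hs \<longrightarrow> \<not> sat W R V 0 F)" for F
  proof (induction F)
    case Bot then show ?case using inv'(4) no_ax by (force simp: is_axiom_def)
  next
    case (Atom p) then show ?case using inv'(4,5) no_ax by (force simp: is_axiom_def V_def glue_V_def)
  next
    case (Imp A B) then show ?case using inv'(4,5) no_imp by force
  next
    case (Box B)
    have "sat W R V 0 (Box B)" if "Box B \<in> Ha"
    proof -
      have "Box B \<in># G" using inv'(4) that by force
      moreover have "sat (Ws i) (Rs i) (Vs i) y B" if "i < length L" "y \<in> Ws i" for i y
      proof -
        have "sat (Ws i) (Rs i) (Vs i) (ws i) (Box B)"
          using cm[rule_format, OF that(1)] \<open>Box B \<in># G\<close> unfolding refutes_def by (simp del: sat.simps)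
        then show ?thesis using cm[rule_format, OF that(1)] that(2) by simp
      qed
      ultimately show ?thesis using reflected Box.IH
        unfolding W_def R_def V_def sat_glue_root_Box by blast
    qed
    moreover have "\<not> sat W R V 0 (Box B)" if "Box B \<in> Hs"
    proof (cases "Box B \<in># D")
      case True
      then obtain i where "i < length L" "L ! i = B" using L by (metis in_set_conv_nth mem_Collect_eq)
      then show ?thesis using cm[rule_format, of i]
        unfolding W_def R_def V_def sat_glue_root_Box by (auto simp: refutes_def)
    next
      case False
      then show ?thesis using inv'(5) that Box.IH
        unfolding W_def R_def V_def sat_glue_root_Box by force
    qed
    ultimately show ?case by blast
  qed
  have "grz_model W R" unfolding W_def R_def using cm grz_model_glue by blast
  moreover have "refutes W R V 0 (G, D)" "0 \<in> W" "\<forall>v\<in>W. R 0 v"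
    using truth inv'(2,3) by (auto simp: refutes_def W_def R_def mem_glue_W)
  ultimately show False using inv'(1) unfolding valid_def by blast
qed

text \<open>The rank of a boxed antecedent formula drops to \<open>0\<close> once it has been reflected, so
  \<open>(refl)\<close> decreases the rank although it duplicates a formula.\<close>
fun suc_rank :: "fm \<Rightarrow> nat" and ant_rank :: "fm set \<Rightarrow> fm \<Rightarrow> nat" where
  "suc_rank Bot = 0"
| "suc_rank (Atom p) = 0"
| "suc_rank (Imp A B) = Suc (ant_rank {} A + suc_rank B)"
| "suc_rank (Box A) = Suc (suc_rank A)"
| "ant_rank Ha Bot = 0"
| "ant_rank Ha (Atom p) = 0"
| "ant_rank Ha (Imp A B) = Suc (ant_rank Ha B + suc_rank A)"
| "ant_rank Ha (Box B) = (if B \<in> Ha then 0 else Suc (ant_rank Ha B))"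

lemma ant_rank_antimono: "Ha \<subseteq> Ha' \<Longrightarrow> ant_rank Ha' F \<le> ant_rank Ha F"
  by (induction F) auto

lemma sum_ant_rank_antimono: "Ha \<subseteq> Ha' \<Longrightarrow> (\<Sum>F\<in>#G. ant_rank Ha' F) \<le> (\<Sum>F\<in>#G. ant_rank Ha F)"
  by (rule sum_mset_mono) (rule ant_rank_antimono)

definition search_rank :: "search_state \<Rightarrow> nat" where
  "search_rank s = (\<Sum>F\<in>#st_ant s. ant_rank (st_seen_ant s) F) + (\<Sum>F\<in>#st_suc s. suc_rank F)"

definition pick_imp :: "fm multiset \<Rightarrow> fm \<times> fm" where
  "pick_imp M = (SOME (A, B). Imp A B \<in># M)"

definition pick_unreflected :: "fm set \<Rightarrow> fm multiset \<Rightarrow> fm" where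
  "pick_unreflected Ha G = (SOME B. Box B \<in># G \<and> B \<notin> Ha)"

definition pick_box_premise :: "fm multiset \<Rightarrow> fm multiset \<Rightarrow> fm" where
  "pick_box_premise G D = (SOME A. Box A \<in># D \<and> valid (boxes G, {#A#}))"

lemma pick_imp_mem: "\<exists>A B. Imp A B \<in># M \<Longrightarrow> pick_imp M = (A, B) \<Longrightarrow> Imp A B \<in># M"
  unfolding pick_imp_def by (metis (mono_tags, lifting) case_prod_conv someI_ex)

lemma pick_unreflected: "\<exists>B. Box B \<in># G \<and> B \<notin> Ha \<Longrightarrow>
    Box (pick_unreflected Ha G) \<in># G \<and> pick_unreflected Ha G \<notin> Ha"
  unfolding pick_unreflected_def by (rule someI_ex)

lemma pick_box_premise: "\<exists>A. Box A \<in># D \<and> valid (boxes G, {#A#}) \<Longrightarrow>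
    Box (pick_box_premise G D) \<in># D \<and> valid (boxes G, {#pick_box_premise G D#})"
  unfolding pick_box_premise_def by (rule someI_ex)

fun expand :: "search_state \<Rightarrow> search_state list" where
  "expand (State G D Ha Hs f) =
    (if is_axiom G D then []
     else if \<exists>A B. Imp A B \<in># G then
       (case pick_imp G of (A, B) \<Rightarrow>
         [State (add_mset B (G - {#Imp A B#})) D (insert B Ha) Hs False,
          State (G - {#Imp A B#}) (add_mset A D) Ha (insert A Hs) False])
     else if \<exists>A B. Imp A B \<in># D then
       (case pick_imp D of (A, B) \<Rightarrow>
         [State (add_mset A G) (add_mset B (D - {#Imp A B#})) (insert A Ha) (insert B Hs) False])
     else if \<exists>B. Box B \<in># G \<and> B \<notin> Ha then
       (let B = pick_unreflected Ha G in [State (add_mset B G) D (insert B Ha) Hs False])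
     else if \<exists>A. Box A \<in># D \<and> valid (boxes G, {#A#}) then
       (let A = pick_box_premise G D in
         [State G (add_mset A (D - {#Box A#})) Ha (insert A Hs) False,
          State (boxes G) {#A#} (set_mset (boxes G)) {A} True])
     else [])"

definition sound_expansion :: "search_state \<Rightarrow> bool" where
  "sound_expansion s \<longleftrightarrow>
     grz_rule False (st_ant s, st_suc s) (map (\<lambda>t. ((st_ant t, st_suc t), st_box_premise t)) (expand s))
     \<and> (\<forall>t\<in>set (expand s). search_inv t \<and> (\<not> st_box_premise t \<longrightarrow> search_rank t < search_rank s))"

lemma search_inv_step:
  assumes "search_inv (State G D Ha Hs f)" "valid (G', D')" "Ha \<subseteq> Ha'" "Hs \<subseteq> Hs'"
    "set_mset G' \<subseteq> Ha'" "set_mset D' \<subseteq> Hs'"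
    "\<forall>F\<in>Ha'. F \<notin> Ha \<longrightarrow> F \<in># G'" "\<forall>F\<in>Hs'. F \<notin> Hs \<longrightarrow> F \<in># D'"
    "\<forall>F. F \<in># G \<longrightarrow> F \<in># G' \<or> decomposed_ant Ha' Hs' F"
    "\<forall>F. F \<in># D \<longrightarrow> F \<in># D' \<or> decomposed_suc Ha' Hs' F"
  shows "search_inv (State G' D' Ha' Hs' f')"
  using assms unfolding search_inv_def by (auto intro: decomposed_ant_mono decomposed_suc_mono)

lemma sound_expansion_axiom:
  assumes "is_axiom G D"
  shows "sound_expansion (State G D Ha Hs f)"
proof -
  have "grz_rule False (G, D) []"
  proof (cases "Bot \<in># G")
    case True
    then show ?thesis using grz_rule.bot[of False "G - {#Bot#}" D] by simp
  next
    case False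
    then obtain p where "Atom p \<in># G" "Atom p \<in># D" using assms unfolding is_axiom_def by blast
    then show ?thesis using grz_rule.ax[of False p "G - {#Atom p#}" "D - {#Atom p#}"] by simp
  qed
  then show ?thesis using assms unfolding sound_expansion_def by simp
qed

lemma sound_expansion_imp_ant:
  assumes inv: "search_inv (State G D Ha Hs f)" and "\<not> is_axiom G D" and ex: "\<exists>A B. Imp A B \<in># G"
  shows "sound_expansion (State G D Ha Hs f)"
proof -
  obtain A B where AB: "pick_imp G = (A, B)" by fastforce
  define G0 where "G0 = G - {#Imp A B#}"
  have G: "G = add_mset (Imp A B) G0" using pick_imp_mem[OF ex AB] unfolding G0_def by simp
  have expand: "expand (State G D Ha Hs f) =
      [State (add_mset B G0) D (insert B Ha) Hs False, State G0 (add_mset A D) Ha (insert A Hs) False]"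
    using assms AB unfolding G0_def by simp
  have v: "valid (G, D)" "set_mset G \<subseteq> Ha" "set_mset D \<subseteq> Hs"
    using inv unfolding search_inv_def by auto
  have "search_inv (State (add_mset B G0) D (insert B Ha) Hs False)"
  proof (rule search_inv_step[OF inv])
    show "valid (add_mset B G0, D)"
      by (rule valid_by_refutation[OF v(1)]) (auto simp: refutes_def G)
  qed (use v G in auto)
  moreover have "search_inv (State G0 (add_mset A D) Ha (insert A Hs) False)"
  proof (rule search_inv_step[OF inv])
    show "valid (G0, add_mset A D)"
      by (rule valid_by_refutation[OF v(1)]) (auto simp: refutes_def G)
  qed (use v G in auto)
  moreover have "search_rank (State (add_mset B G0) D (insert B Ha) Hs False) < search_rank (State G D Ha Hs f)"
    using sum_ant_rank_antimono[of Ha "insert B Ha" G0, OF subset_insertI] ant_rank_antimono[of Ha "insert B Ha" B, OF subset_insertI]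
    unfolding search_rank_def by (simp add: G)
  moreover have "search_rank (State G0 (add_mset A D) Ha (insert A Hs) False) < search_rank (State G D Ha Hs f)"
    unfolding search_rank_def by (simp add: G)
  moreover have "grz_rule False (G, D) [((add_mset B G0, D), False), ((G0, add_mset A D), False)]"
    unfolding G by (rule grz_rule.impL)
  ultimately show ?thesis unfolding sound_expansion_def expand by simp
qed

lemma sound_expansion_imp_suc:
  assumes inv: "search_inv (State G D Ha Hs f)" and "\<not> is_axiom G D" "\<forall>A B. Imp A B \<notin># G"
    and ex: "\<exists>A B. Imp A B \<in># D"
  shows "sound_expansion (State G D Ha Hs f)"
proof -
  obtain A B where AB: "pick_imp D = (A, B)" by fastforce
  define D0 where "D0 = D - {#Imp A B#}"
  have D: "D = add_mset (Imp A B) D0" using pick_imp_mem[OF ex AB] unfolding D0_def by simp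
  have expand: "expand (State G D Ha Hs f) =
      [State (add_mset A G) (add_mset B D0) (insert A Ha) (insert B Hs) False]"
    using assms AB unfolding D0_def by simp
  have v: "valid (G, D)" "set_mset G \<subseteq> Ha" "set_mset D \<subseteq> Hs"
    using inv unfolding search_inv_def by auto
  have "search_inv (State (add_mset A G) (add_mset B D0) (insert A Ha) (insert B Hs) False)"
  proof (rule search_inv_step[OF inv])
    show "valid (add_mset A G, add_mset B D0)"
      by (rule valid_by_refutation[OF v(1)]) (auto simp: refutes_def D)
  qed (use v D in auto)
  moreover have "search_rank (State (add_mset A G) (add_mset B D0) (insert A Ha) (insert B Hs) False)
      < search_rank (State G D Ha Hs f)"
    using sum_ant_rank_antimono[of Ha "insert A Ha" G, OF subset_insertI] ant_rank_antimono[of "{}" "insert A Ha" A]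
    unfolding search_rank_def by (simp add: D)
  moreover have "grz_rule False (G, D) [((add_mset A G, add_mset B D0), False)]"
    unfolding D by (rule grz_rule.impR)
  ultimately show ?thesis unfolding sound_expansion_def expand by simp
qed

lemma sound_expansion_refl:
  assumes inv: "search_inv (State G D Ha Hs f)" and "\<not> is_axiom G D"
    and "\<forall>A B. Imp A B \<notin># G" "\<forall>A B. Imp A B \<notin># D" and ex: "\<exists>B. Box B \<in># G \<and> B \<notin> Ha"
  shows "sound_expansion (State G D Ha Hs f)"
proof -
  define B where "B = pick_unreflected Ha G"
  have B: "Box B \<in># G" "B \<notin> Ha" using pick_unreflected[OF ex] unfolding B_def by auto
  define G0 where "G0 = G - {#Box B#}"
  have G: "G = add_mset (Box B) G0" using B unfolding G0_def by simp
  have expand: "expand (State G D Ha Hs f) = [State (add_mset B G) D (insert B Ha) Hs False]"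
    using assms unfolding B_def by (simp add: Let_def)
  have v: "valid (G, D)" "set_mset G \<subseteq> Ha" "set_mset D \<subseteq> Hs"
    using inv unfolding search_inv_def by auto
  have "search_inv (State (add_mset B G) D (insert B Ha) Hs False)"
  proof (rule search_inv_step[OF inv])
    show "valid (add_mset B G, D)"
      by (rule valid_by_refutation[OF v(1)]) (auto simp: refutes_def)
  qed (use v in auto)
  moreover have "search_rank (State (add_mset B G) D (insert B Ha) Hs False) < search_rank (State G D Ha Hs f)"
    using sum_ant_rank_antimono[of Ha "insert B Ha" G0, OF subset_insertI] ant_rank_antimono[of Ha "insert B Ha" B, OF subset_insertI] B(2)
    unfolding search_rank_def by (simp add: G)
  moreover have "grz_rule False (G, D) [((add_mset B G, D), False)]"
    unfolding G by (rule grz_rule.refl)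
  ultimately show ?thesis unfolding sound_expansion_def expand by simp
qed

lemma sound_expansion_box:
  assumes inv: "search_inv (State G D Ha Hs f)" and "\<not> is_axiom G D"
    and "\<forall>A B. Imp A B \<notin># G" "\<forall>A B. Imp A B \<notin># D" and "\<forall>B. Box B \<in># G \<longrightarrow> B \<in> Ha"
  shows "sound_expansion (State G D Ha Hs f)"
proof -
  have ex: "\<exists>A. Box A \<in># D \<and> valid (boxes G, {#A#})"
    using saturated_box_premise_valid[OF inv] assms(2-) by blast
  define A where "A = pick_box_premise G D"
  have A: "Box A \<in># D" "valid (boxes G, {#A#})" using pick_box_premise[OF ex] unfolding A_def by auto
  define D0 where "D0 = D - {#Box A#}"
  have D: "D = add_mset (Box A) D0" using A unfolding D0_def by simp
  have G: "G = filter_mset (\<lambda>F. \<not> is_box F) G + image_mset Box (image_mset unbox (boxes G))"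
    unfolding image_Box_unbox_boxes unfolding boxes_def using multiset_partition[of G is_box] by (simp add: union_commute)
  have expand: "expand (State G D Ha Hs f) = [State G (add_mset A D0) Ha (insert A Hs) False,
      State (boxes G) {#A#} (set_mset (boxes G)) {A} True]"
    using assms ex unfolding A_def D0_def by (auto simp: Let_def)
  have v: "valid (G, D)" "set_mset G \<subseteq> Ha" "set_mset D \<subseteq> Hs"
    using inv unfolding search_inv_def by auto
  have "grz_rule False (G, D) [((G, add_mset A D0), False), ((boxes G, {#A#}), True)]"
    using grz_rule.box[of False _ "image_mset unbox (boxes G)" A D0] G D
    unfolding image_Box_unbox_boxes by metis
  moreover have "search_inv (State G (add_mset A D0) Ha (insert A Hs) False)"
  proof (rule search_inv_step[OF inv])
    show "valid (G, add_mset A D0)"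
      by (rule valid_by_refutation[OF v(1)]) (auto simp: refutes_def D dest: grz_model_refl)
  qed (use v D in auto)
  moreover have "search_inv (State (boxes G) {#A#} (set_mset (boxes G)) {A} True)"
    unfolding search_inv_def using A(2) by auto
  moreover have "search_rank (State G (add_mset A D0) Ha (insert A Hs) False) < search_rank (State G D Ha Hs f)"
    unfolding search_rank_def by (simp add: D)
  ultimately show ?thesis unfolding sound_expansion_def expand by simp
qed

lemma search_inv_sound_expansion: "search_inv s \<Longrightarrow> sound_expansion s"
  by (cases s) (metis sound_expansion_axiom sound_expansion_imp_ant sound_expansion_imp_suc
      sound_expansion_refl sound_expansion_box)

lemma nat_seq_not_eventually_decreasing:
  fixes f :: "nat \<Rightarrow> nat"
  assumes "\<And>n. N \<le> n \<Longrightarrow> f (Suc n) < f n"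
  shows False
proof -
  have "f (N + k) + k \<le> f N" for k
  proof (induction k)
    case (Suc k)
    then show ?case using assms[of "N + k", OF le_add1] by simp
  qed simp
  from this[of "Suc (f N)"] show False by simp
qed

lemma provable_by_search:
  fixes expand :: "'s \<Rightarrow> 's list" and seq :: "'s \<Rightarrow> sequent" and rp :: "'s \<Rightarrow> bool"
    and rank :: "'s \<Rightarrow> nat"
  assumes s0: "I s0"
    and rule: "\<And>s. I s \<Longrightarrow> grz_rule c (seq s) (map (\<lambda>t. (seq t, rp t)) (expand s))"
    and child: "\<And>s t. I s \<Longrightarrow> t \<in> set (expand s) \<Longrightarrow> I t \<and> (\<not> rp t \<longrightarrow> rank t < rank s)"
  shows "provable c (seq s0)"
proof -
  define node where "node p = foldl (\<lambda>s i. expand s ! i) s0 p" for p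
  define nch where "nch p = length (expand (node p))" for p
  have node_snoc: "node (p @ [i]) = expand (node p) ! i" for p i
    by (simp add: node_def)
  have inv: "I (node p)" if "valid_pos nch p" for p
    using that
  proof (induction p rule: rev_induct)
    case Nil then show ?case using s0 by (simp add: node_def)
  next
    case (snoc i p) then show ?case using child by (simp add: valid_pos_snoc node_snoc nch_def)
  qed
  have "map (\<lambda>i. (seq (node (p @ [i])), rp (node (p @ [i])))) [0..<nch p]
      = map (\<lambda>t. (seq t, rp t)) (expand (node p))" for p
    by (rule nth_equalityI) (simp_all add: node_snoc nch_def)
  then have "grz_rule c (seq (node p)) (map (\<lambda>i. (seq (node (p @ [i])), rp (node (p @ [i])))) [0..<nch p])"
    if "valid_pos nch p" for p
    using rule[OF inv[OF that]] by simp
  moreover have "infinite {n. rp (node (map b [0..<Suc n]))}"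
    if b: "\<forall>n. b n < nch (map b [0..<n])" for b
  proof
    assume "finite {n. rp (node (map b [0..<Suc n]))}"
    then obtain N where "\<forall>n\<in>{n. rp (node (map b [0..<Suc n]))}. n < N"
      unfolding finite_nat_set_iff_bounded by blast
    then have N: "\<forall>n\<ge>N. \<not> rp (node (map b [0..<Suc n]))" by auto
    define q where "q n = map b [0..<n]" for n
    have "valid_pos nch (q n)" for n
      by (induction n) (use b in \<open>simp_all add: q_def valid_pos_def nth_append\<close>)
    then have dec: "N \<le> n \<Longrightarrow> rank (node (q (Suc n))) < rank (node (q n))" for n
      using child[OF inv] N b by (simp add: q_def node_snoc nch_def)
    show False
      using nat_seq_not_eventually_decreasing[where f = "\<lambda>n. rank (node (q n))", OF dec] .
  qed
  ultimately have "inf_proof c (seq \<circ> node) nch (rp \<circ> node)"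
    unfolding inf_proof_def by simp
  then show ?thesis unfolding provable_def by (metis comp_apply foldl_Nil node_def)
qed

lemma valid_imp_Grz_inf_provable:
  assumes "valid (\<Gamma>, \<Delta>)"
  shows "Grz_inf_provable (\<Gamma>, \<Delta>)"
proof -
  let ?s0 = "State \<Gamma> \<Delta> (set_mset \<Gamma>) (set_mset \<Delta>) False"
  have "search_inv ?s0" using assms unfolding search_inv_def by auto
  then have "provable False (st_ant ?s0, st_suc ?s0)"
  proof (rule provable_by_search[where seq = "\<lambda>s. (st_ant s, st_suc s)"])
    fix s assume "search_inv s"
    then show "grz_rule False (st_ant s, st_suc s) (map (\<lambda>t. ((st_ant t, st_suc t), st_box_premise t)) (expand s))"
      and "\<And>t. t \<in> set (expand s) \<Longrightarrow> search_inv t \<and> (\<not> st_box_premise t \<longrightarrow> search_rank t < search_rank s)"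
      using search_inv_sound_expansion unfolding sound_expansion_def by blast+
  qed
  then show ?thesis by simp
qed

theorem theorem6p6:
  fixes \<Gamma> \<Delta> :: "fm multiset"
  assumes "Grz_inf_cut_provable (\<Gamma>, \<Delta>)"
  shows "Grz_inf_provable (\<Gamma>, \<Delta>)"
  using valid_imp_Grz_inf_provable[OF provable_imp_valid[OF assms]] .

end
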